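(* Let $\gamma:I\to\mathbb{R}^2$ be a $C^\infty$ curve with $0\in I$, $\gamma'(0)=\gamma''(0)=\gamma'''(0)=\mathbf{0}$ and $\gamma^{(4)}(0)\neq\mathbf{0}$. Then for every $C^\infty$ diffeomorphism germ $\psi$ of $(\mathbb{R},0)$ onto $(\mathbb{R},0)$ and every congruence $\Phi(x)=Rx+b$ of $\mathbb{R}^2$ ($R\in O(2)$, $b\in\mathbb{R}^2$), the curves $\gamma\circ\psi$ and $\Phi\circ\gamma$ have the same $(4,5;\pm7)$-cuspidal curvature $\kappa_q$ as $\gamma$.
   Context: For a curve $c$ with $c'(0)=c''(0)=c'''(0)=\mathbf{0}$ and $c^{(4)}(0)\neq\mathbf{0}$, set $A=\det(c^{(5)}(0),c^{(4)}(0))$, $B=\det(c^{(6)}(0),c^{(4)}(0))$, $C=\det(c^{(7)}(0),c^{(4)}(0))$, $D=\det(c^{(6)}(0),c^{(5)}(0))$; the $(4,5;\pm7)$-cuspidal curvature is $\kappa_q=\dfrac{-77B^2+105AD+60AC}{\|c^{(4)}(0)\|^5}$, where $\|\cdot\|$ is the Euclidean norm. *)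

theory Defs
  imports "HOL-Analysis.Analysis"
begin

definition vderiv_n :: "nat \<Rightarrow> (real \<Rightarrow> 'a::real_normed_vector) \<Rightarrow> real \<Rightarrow> 'a" where
  "vderiv_n n f = ((\<lambda>g t. vector_derivative g (at t)) ^^ n) f"

definition smooth_on :: "real set \<Rightarrow> (real \<Rightarrow> 'a::real_normed_vector) \<Rightarrow> bool" where
  "smooth_on U f \<longleftrightarrow> (\<forall>n. \<forall>t\<in>U. (vderiv_n n f has_vector_derivative vderiv_n (Suc n) f t) (at t))"

definition det2 :: "real^2 \<Rightarrow> real^2 \<Rightarrow> real" where
  "det2 u v = u$1 * v$2 - u$2 * v$1"

definition cusp_kappa :: "(real \<Rightarrow> real^2) \<Rightarrow> real" where
  "cusp_kappa c =
    (let c4 = vderiv_n 4 c 0; c5 = vderiv_n 5 c 0; c6 = vderiv_n 6 c 0; c7 = vderiv_n 7 c 0;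
         A = det2 c5 c4; B = det2 c6 c4; C = det2 c7 c4; D = det2 c6 c5
     in (-77 * B^2 + 105 * A * D + 60 * A * C) / norm c4 ^ 5)"

end

theory Submission
  imports Defs
begin

text \<open>
  Under a reparametrisation \<open>\<gamma> \<circ> \<psi>\<close>, Faa di Bruno's formula expresses the derivatives of
  orders 4 to 7 at 0 through those of \<open>\<gamma>\<close>; since \<open>\<gamma>'\<close>, \<open>\<gamma>''\<close>, \<open>\<gamma>'''\<close> vanish at 0, this
  expression is triangular with diagonal entries \<open>\<psi>'(0)\<^sup>k\<close>. Substituting, both the
  numerator of \<open>\<kappa>\<^sub>q\<close> and \<open>\<parallel>\<gamma>\<^sup>(\<^sup>4\<^sup>)(0)\<parallel>\<^sup>5\<close> get multiplied by \<open>\<psi>'(0)\<^sup>2\<^sup>0\<close>, which cancels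
  because \<open>\<psi>'(0) \<noteq> 0\<close>, \<open>\<psi>\<close> having a differentiable inverse. Under a congruence the
  derivatives of positive order are mapped by \<open>R\<close>, so every determinant picks up the factor
  \<open>det R = \<plusminus>1\<close>, which occurs squared in the numerator, while norms are preserved.
\<close>

lemma vderiv_n_0 [simp]: "vderiv_n 0 f = f"
  by (simp add: vderiv_n_def)

lemma smooth_onD:
  "smooth_on U f \<Longrightarrow> t \<in> U \<Longrightarrow> (vderiv_n n f has_vector_derivative vderiv_n (Suc n) f t) (at t)"
  unfolding smooth_on_def by blast

lemma vderiv_n_Suc_eqI:
  assumes "open J" "t \<in> J" "\<And>s. s \<in> J \<Longrightarrow> vderiv_n n f s = F s"
    and "(F has_vector_derivative D) (at t)"
  shows "vderiv_n (Suc n) f t = D"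
proof -
  have "(vderiv_n n f has_vector_derivative D) (at t)"
    using assms by (metis has_vector_derivative_transform_within_open)
  then show ?thesis
    by (simp add: vderiv_n_def vector_derivative_at)
qed

text \<open>Row \<open>n\<close> lists the partial Bell polynomials \<open>B\<^sub>n\<^sub>,\<^sub>k(x\<^sub>1, x\<^sub>2, \<dots>)\<close>, \<open>k = 0..n\<close>: the
  coefficients in Faa di Bruno's formula \<open>(\<gamma> \<circ> \<psi>)\<^sup>(\<^sup>n\<^sup>) = \<Sum>\<^sub>k B\<^sub>n\<^sub>,\<^sub>k(\<psi>', \<psi>'', \<dots>) (\<gamma>\<^sup>(\<^sup>k\<^sup>) \<circ> \<psi>)\<close>.
  Only the rows \<open>n \<le> 7\<close> are tabulated; beyond them \<open>bell\<close> is unspecified.\<close>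

definition bell_rows :: "(nat \<Rightarrow> real) \<Rightarrow> real list list" where
  "bell_rows x =
    [[1],
     [0, x 1],
     [0, x 2, x 1 ^ 2],
     [0, x 3, 3 * x 1 * x 2, x 1 ^ 3],
     [0, x 4, 3 * x 2 ^ 2 + 4 * x 1 * x 3, 6 * x 1 ^ 2 * x 2, x 1 ^ 4],
     [0, x 5, 10 * x 2 * x 3 + 5 * x 1 * x 4, 15 * x 1 * x 2 ^ 2 + 10 * x 1 ^ 2 * x 3,
      10 * x 1 ^ 3 * x 2, x 1 ^ 5],
     [0, x 6, 10 * x 3 ^ 2 + 15 * x 2 * x 4 + 6 * x 1 * x 5,
      15 * x 2 ^ 3 + 60 * x 1 * x 2 * x 3 + 15 * x 1 ^ 2 * x 4,
      45 * x 1 ^ 2 * x 2 ^ 2 + 20 * x 1 ^ 3 * x 3, 15 * x 1 ^ 4 * x 2, x 1 ^ 6],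
     [0, x 7, 35 * x 3 * x 4 + 21 * x 2 * x 5 + 7 * x 1 * x 6,
      105 * x 2 ^ 2 * x 3 + 70 * x 1 * x 3 ^ 2 + 105 * x 1 * x 2 * x 4 + 21 * x 1 ^ 2 * x 5,
      105 * x 1 * x 2 ^ 3 + 210 * x 1 ^ 2 * x 2 * x 3 + 35 * x 1 ^ 3 * x 4,
      105 * x 1 ^ 3 * x 2 ^ 2 + 35 * x 1 ^ 4 * x 3, 21 * x 1 ^ 5 * x 2, x 1 ^ 7]]"

definition bell :: "(nat \<Rightarrow> real) \<Rightarrow> nat \<Rightarrow> nat \<Rightarrow> real" where
  "bell x n k = bell_rows x ! n ! k"

lemma has_vector_derivative_bell_sum:
  fixes p :: "nat \<Rightarrow> real \<Rightarrow> real" and G :: "nat \<Rightarrow> real \<Rightarrow> 'a::euclidean_space"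
  assumes "n < 7"
    and p: "\<And>j. (p j has_real_derivative p (Suc j) t) (at t)"
    and G: "\<And>k. (G k has_vector_derivative p 1 t *\<^sub>R G (Suc k) t) (at t)"
  shows "((\<lambda>s. \<Sum>k\<le>n. bell (\<lambda>j. p j s) n k *\<^sub>R G k s) has_vector_derivative
           (\<Sum>k\<le>Suc n. bell (\<lambda>j. p j t) (Suc n) k *\<^sub>R G k t)) (at t)"
proof -
  have "n = 0 \<or> n = 1 \<or> n = 2 \<or> n = 3 \<or> n = 4 \<or> n = 5 \<or> n = 6"
    using assms(1) by linarith
  \<comment> \<open>Row by row, this is the recursion \<open>B\<^sub>n\<^sub>+\<^sub>1\<^sub>,\<^sub>k = (B\<^sub>n\<^sub>,\<^sub>k)' + x\<^sub>1 B\<^sub>n\<^sub>,\<^sub>k\<^sub>-\<^sub>1\<close>, where \<open>x\<^sub>j' = x\<^sub>j\<^sub>+\<^sub>1\<close>.\<close>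
  then show ?thesis
    apply (elim disjE)
    apply (simp_all add: bell_def bell_rows_def eval_nat_numeral atMost_Suc)
    by (rule has_vector_derivative_eq_rhs,
        (rule derivative_eq_intros p G refl | rule has_vector_derivative_scaleR)+,
        simp add: euclidean_eq_iff[where 'a='a] inner_add_left algebra_simps)+
qed

lemma vderiv_n_comp_bell:
  fixes \<gamma> :: "real \<Rightarrow> 'a::euclidean_space" and \<psi> :: "real \<Rightarrow> real"
  assumes J: "open J" and "smooth_on J \<psi>" "smooth_on I \<gamma>" "\<psi> ` J \<subseteq> I"
    and "n \<le> 7" "t \<in> J"
  shows "vderiv_n n (\<gamma> \<circ> \<psi>) t = (\<Sum>k\<le>n. bell (\<lambda>j. vderiv_n j \<psi> t) n k *\<^sub>R vderiv_n k \<gamma> (\<psi> t))"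
  using \<open>n \<le> 7\<close> \<open>t \<in> J\<close>
proof (induction n arbitrary: t)
  case 0
  then show ?case by (simp add: vderiv_n_def bell_def bell_rows_def)
next
  case (Suc n)
  have p: "(vderiv_n j \<psi> has_real_derivative vderiv_n (Suc j) \<psi> t) (at t)" for j
    using smooth_onD[OF \<open>smooth_on J \<psi>\<close> \<open>t \<in> J\<close>]
    by (simp add: has_real_derivative_iff_has_vector_derivative)
  have \<psi>': "(\<psi> has_vector_derivative vderiv_n 1 \<psi> t) (at t)"
    using smooth_onD[OF \<open>smooth_on J \<psi>\<close> \<open>t \<in> J\<close>, of 0] by simp
  have G: "((\<lambda>s. vderiv_n k \<gamma> (\<psi> s)) has_vector_derivative
             vderiv_n 1 \<psi> t *\<^sub>R vderiv_n (Suc k) \<gamma> (\<psi> t)) (at t)" for k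
    using vector_diff_chain_at[OF \<psi>' smooth_onD[OF \<open>smooth_on I \<gamma>\<close>]] assms(4) \<open>t \<in> J\<close>
    by (auto simp: o_def)
  show ?case
  proof (rule vderiv_n_Suc_eqI[OF J \<open>t \<in> J\<close> Suc.IH])
    show "((\<lambda>s. \<Sum>k\<le>n. bell (\<lambda>j. vderiv_n j \<psi> s) n k *\<^sub>R vderiv_n k \<gamma> (\<psi> s))
        has_vector_derivative
          (\<Sum>k\<le>Suc n. bell (\<lambda>j. vderiv_n j \<psi> t) (Suc n) k *\<^sub>R vderiv_n k \<gamma> (\<psi> t))) (at t)"
      by (rule has_vector_derivative_bell_sum[where p="\<lambda>j. vderiv_n j \<psi>"
            and G="\<lambda>k s. vderiv_n k \<gamma> (\<psi> s)", OF _ p G])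
        (use Suc.prems in simp)
  qed (use Suc.prems in auto)
qed

lemma vderiv_n_affine:
  assumes "bounded_linear L" "open I" "smooth_on I \<gamma>" "t \<in> I"
  shows "vderiv_n n (\<lambda>s. L (\<gamma> s) + b) t = L (vderiv_n n \<gamma> t) + (if n = 0 then b else 0)"
  using \<open>t \<in> I\<close>
proof (induction n arbitrary: t)
  case (Suc n)
  have "((\<lambda>s. L (vderiv_n n \<gamma> s) + (if n = 0 then b else 0)) has_vector_derivative
      L (vderiv_n (Suc n) \<gamma> t)) (at t)"
    using bounded_linear.has_vector_derivative[OF assms(1) smooth_onD[OF assms(3) Suc.prems]]
    by (simp add: has_vector_derivative_add_const)
  then show ?case
    using vderiv_n_Suc_eqI[OF assms(2) Suc.prems Suc.IH] by simp
qed simp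

lemma has_real_derivative_nonzero_of_differentiable_inverse:
  assumes "open J" "t \<in> J" "inj_on \<psi> J" "(\<psi> has_real_derivative d) (at t)"
    and "the_inv_into J \<psi> differentiable (at (\<psi> t))"
  shows "d \<noteq> 0"
proof -
  obtain e where "(the_inv_into J \<psi> has_real_derivative e) (at (\<psi> t))"
    using assms(5) real_differentiable_def by blast
  from DERIV_chain[OF this assms(4)]
  have "((\<lambda>s. s) has_real_derivative e * d) (at t)"
  proof (rule has_field_derivative_transform_within_open[OF _ assms(1,2)])
    show "(the_inv_into J \<psi> \<circ> \<psi>) s = s" if "s \<in> J" for s
      using assms(3) that by (simp add: the_inv_into_f_f)
  qed
  then have "e * d = 1"
    using DERIV_unique[OF _ DERIV_ident] by blast
  then show ?thesis
    by auto
qed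

lemma det2_add_left: "det2 (u + v) w = det2 u w + det2 v w"
  by (simp add: det2_def algebra_simps)

lemma det2_add_right: "det2 u (v + w) = det2 u v + det2 u w"
  by (simp add: det2_def algebra_simps)

lemma det2_scaleR_left: "det2 (a *\<^sub>R u) v = a * det2 u v"
  by (simp add: det2_def algebra_simps)

lemma det2_scaleR_right: "det2 u (a *\<^sub>R v) = a * det2 u v"
  by (simp add: det2_def algebra_simps)

lemma det2_self: "det2 u u = 0"
  by (simp add: det2_def)

lemma det2_swap: "det2 u v = - det2 v u"
  by (simp add: det2_def)

lemma det2_matrix_vector_mult: "det2 (R *v u) (R *v v) = det R * det2 u v"
  unfolding det2_def det_2 matrix_vector_mult_def by (simp add: sum_2 algebra_simps)

definition cusp_kappa_jet :: "real^2 \<Rightarrow> real^2 \<Rightarrow> real^2 \<Rightarrow> real^2 \<Rightarrow> real" where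
  "cusp_kappa_jet c4 c5 c6 c7 =
    (-77 * (det2 c6 c4)\<^sup>2 + 105 * det2 c5 c4 * det2 c6 c5 + 60 * det2 c5 c4 * det2 c7 c4)
      / norm c4 ^ 5"

lemma cusp_kappa_eq_jet:
  "cusp_kappa c = cusp_kappa_jet (vderiv_n 4 c 0) (vderiv_n 5 c 0) (vderiv_n 6 c 0) (vderiv_n 7 c 0)"
  by (simp add: cusp_kappa_def cusp_kappa_jet_def Let_def)

lemma cusp_kappa_jet_orthogonal:
  assumes "orthogonal_matrix R"
  shows "cusp_kappa_jet (R *v c4) (R *v c5) (R *v c6) (R *v c7) = cusp_kappa_jet c4 c5 c6 c7"
proof -
  have "det R * det R = 1"
    using det_orthogonal_matrix[OF assms] by auto
  then have num: "-77 * (det R * b)\<^sup>2 + 105 * (det R * a) * (det R * d) + 60 * (det R * a) * (det R * c)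
      = -77 * b\<^sup>2 + 105 * a * d + 60 * a * c" for a b c d
    by algebra
  have "norm (R *v x) = norm x" for x
    using assms by (simp add: orthogonal_transformation_matrix orthogonal_transformation_norm)
  then show ?thesis
    unfolding cusp_kappa_jet_def det2_matrix_vector_mult num by simp
qed

lemma cusp_kappa_jet_bell:
  fixes g :: "nat \<Rightarrow> real^2"
  assumes "x 1 \<noteq> 0" "g 1 = 0" "g 2 = 0" "g 3 = 0"
  shows "cusp_kappa_jet (\<Sum>k\<le>4. bell x 4 k *\<^sub>R g k) (\<Sum>k\<le>5. bell x 5 k *\<^sub>R g k)
           (\<Sum>k\<le>6. bell x 6 k *\<^sub>R g k) (\<Sum>k\<le>7. bell x 7 k *\<^sub>R g k)
         = cusp_kappa_jet (g 4) (g 5) (g 6) (g 7)"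
proof -
  define A B C D where "A = det2 (g 5) (g 4)" "B = det2 (g 6) (g 4)" "C = det2 (g 7) (g 4)"
    "D = det2 (g 6) (g 5)"
  have jets: "(\<Sum>k\<le>4. bell x 4 k *\<^sub>R g k) = x 1 ^ 4 *\<^sub>R g 4"
    "(\<Sum>k\<le>5. bell x 5 k *\<^sub>R g k) = (10 * x 1 ^ 3 * x 2) *\<^sub>R g 4 + x 1 ^ 5 *\<^sub>R g 5"
    "(\<Sum>k\<le>6. bell x 6 k *\<^sub>R g k) = (45 * x 1 ^ 2 * x 2 ^ 2 + 20 * x 1 ^ 3 * x 3) *\<^sub>R g 4
        + (15 * x 1 ^ 4 * x 2) *\<^sub>R g 5 + x 1 ^ 6 *\<^sub>R g 6"
    "(\<Sum>k\<le>7. bell x 7 k *\<^sub>R g k) = (105 * x 1 * x 2 ^ 3 + 210 * x 1 ^ 2 * x 2 * x 3 + 35 * x 1 ^ 3 * x 4) *\<^sub>R g 4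
        + (105 * x 1 ^ 3 * x 2 ^ 2 + 35 * x 1 ^ 4 * x 3) *\<^sub>R g 5 + (21 * x 1 ^ 5 * x 2) *\<^sub>R g 6
        + x 1 ^ 7 *\<^sub>R g 7"
    using assms(2-4) by (simp_all add: bell_def bell_rows_def atMost_Suc eval_nat_numeral)
  have num: "-77 * (det2 (\<Sum>k\<le>6. bell x 6 k *\<^sub>R g k) (\<Sum>k\<le>4. bell x 4 k *\<^sub>R g k))\<^sup>2
      + 105 * det2 (\<Sum>k\<le>5. bell x 5 k *\<^sub>R g k) (\<Sum>k\<le>4. bell x 4 k *\<^sub>R g k)
            * det2 (\<Sum>k\<le>6. bell x 6 k *\<^sub>R g k) (\<Sum>k\<le>5. bell x 5 k *\<^sub>R g k)
      + 60 * det2 (\<Sum>k\<le>5. bell x 5 k *\<^sub>R g k) (\<Sum>k\<le>4. bell x 4 k *\<^sub>R g k)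
           * det2 (\<Sum>k\<le>7. bell x 7 k *\<^sub>R g k) (\<Sum>k\<le>4. bell x 4 k *\<^sub>R g k)
    = x 1 ^ 20 * (-77 * B\<^sup>2 + 105 * A * D + 60 * A * C)"
    unfolding jets
    by (simp add: det2_add_left det2_add_right det2_scaleR_left det2_scaleR_right det2_self
        det2_swap[of "g 4" "g 5"] det2_swap[of "g 4" "g 6"] det2_swap[of "g 4" "g 7"]
        det2_swap[of "g 5" "g 6"] A_B_C_D_def[symmetric]) algebra
  have norm: "norm (\<Sum>k\<le>4. bell x 4 k *\<^sub>R g k) ^ 5 = x 1 ^ 20 * norm (g 4) ^ 5"
  proof -
    have "norm (\<Sum>k\<le>4. bell x 4 k *\<^sub>R g k) ^ 5 = \<bar>x 1\<bar> ^ 20 * norm (g 4) ^ 5"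
      unfolding jets by (simp add: power_mult_distrib flip: power_mult)
    then show ?thesis
      by (simp add: power_even_abs_numeral)
  qed
  show ?thesis
    unfolding cusp_kappa_jet_def num norm using assms(1) by (simp add: A_B_C_D_def)
qed

theorem mainTheorem10:
  fixes \<gamma> :: "real \<Rightarrow> real^2" and I :: "real set"
  assumes "is_interval I" "open I" "0 \<in> I"
    and "smooth_on I \<gamma>"
    and "vderiv_n 1 \<gamma> 0 = 0" "vderiv_n 2 \<gamma> 0 = 0" "vderiv_n 3 \<gamma> 0 = 0"
    and "vderiv_n 4 \<gamma> 0 \<noteq> 0"
  shows "(\<forall>(\<psi>::real \<Rightarrow> real) J. open J \<and> 0 \<in> J \<and> \<psi> 0 = 0 \<and> \<psi> ` J \<subseteq> I \<and>
            smooth_on J \<psi> \<and> inj_on \<psi> J \<and> open (\<psi> ` J) \<and>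
            smooth_on (\<psi> ` J) (the_inv_into J \<psi>)
           \<longrightarrow> cusp_kappa (\<gamma> \<circ> \<psi>) = cusp_kappa \<gamma>)
       \<and> (\<forall>(R::real^2^2) (b::real^2). orthogonal_matrix R
           \<longrightarrow> cusp_kappa (\<lambda>t. R *v \<gamma> t + b) = cusp_kappa \<gamma>)"
proof (intro conjI allI impI, elim conjE)
  fix \<psi> :: "real \<Rightarrow> real" and J
  assume J: "open J" "0 \<in> J" and "\<psi> 0 = 0" "\<psi> ` J \<subseteq> I" "smooth_on J \<psi>" "inj_on \<psi> J"
    and "smooth_on (\<psi> ` J) (the_inv_into J \<psi>)"
  have "vderiv_n 1 \<psi> 0 \<noteq> 0"
  proof (rule has_real_derivative_nonzero_of_differentiable_inverse[OF J \<open>inj_on \<psi> J\<close>])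
    show "(\<psi> has_real_derivative vderiv_n 1 \<psi> 0) (at 0)"
      using smooth_onD[OF \<open>smooth_on J \<psi>\<close> J(2), of 0]
      by (simp add: has_real_derivative_iff_has_vector_derivative)
    show "the_inv_into J \<psi> differentiable at (\<psi> 0)"
      using smooth_onD[OF \<open>smooth_on (\<psi> ` J) (the_inv_into J \<psi>)\<close>, of "\<psi> 0" 0] J(2)
      by (auto simp: differentiable_def has_vector_derivative_def)
  qed
  then show "cusp_kappa (\<gamma> \<circ> \<psi>) = cusp_kappa \<gamma>"
    using cusp_kappa_jet_bell[of "\<lambda>j. vderiv_n j \<psi> 0" "\<lambda>k. vderiv_n k \<gamma> 0"] assms(5-7)
      vderiv_n_comp_bell[OF J(1) \<open>smooth_on J \<psi>\<close> assms(4) \<open>\<psi> ` J \<subseteq> I\<close> _ J(2)]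
    by (simp add: cusp_kappa_eq_jet \<open>\<psi> 0 = 0\<close>)
next
  fix R :: "real^2^2" and b :: "real^2"
  assume "orthogonal_matrix R"
  then show "cusp_kappa (\<lambda>t. R *v \<gamma> t + b) = cusp_kappa \<gamma>"
    using vderiv_n_affine[OF matrix_vector_mul_bounded_linear[of R] assms(2,4,3), of _ b]
    by (simp add: cusp_kappa_eq_jet cusp_kappa_jet_orthogonal)
qed

end
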